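(* Let $(X,d,\mu)$ be a metric space with a Borel measure $\mu$ and fix $x\in X$. Suppose $\mathrm{vol}_\delta^x(l)<\infty$ for every $\delta>0$ and $l\in\mathbb N$, and that there is $\delta_0>0$ with $\limsup_{l\to\infty}\frac1l\log\mathrm{vol}_{\delta_0}^x(l)>0$. Then $h_\infty(X)=\infty$.
   Context: For $\delta>0$ a $\delta$-path is a sequence $(x_0,\dots,x_n)$ with $d(x_{i-1},x_i)\le\delta$; the $\delta$-component $[x]_\delta$ of $x$ is the set of points connected to $x$ by a $\delta$-path. For $x_0\in X$ and $n\in\mathbb N$, $B_\delta(x_0,n)=\{x_n\in X:\exists\ \delta\text{-path }(x_0,x_1,\dots,x_n)\}$. Define $\mathrm{vol}_\delta^x(l)=\sup_{x_0\in[x]_\delta}\mu(B_\delta(x_0,l))$. Coarse entropy $h_\infty(X)=\lim_{\delta\to\infty}\lim_{R\to\infty}\limsup_{n\to\infty}\frac1n\log s(n,R,\delta,x_0)$, where $s(n,R,\delta,x_0)$ is the supremum of cardinalities of $R$-separated sets of $\delta$-paths of length $n$ starting at $x_0$, paths compared by $\max_i d(x_i,y_i)$. *)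

theory Defs
  imports "HOL-Analysis.Analysis"
begin

definition dpath :: "real \<Rightarrow> 'a::metric_space \<Rightarrow> nat \<Rightarrow> 'a list \<Rightarrow> bool" where
  "dpath \<delta> x0 n p \<longleftrightarrow> length p = Suc n \<and> p ! 0 = x0 \<and>
     (\<forall>i<n. dist (p ! i) (p ! Suc i) \<le> \<delta>)"

definition dball :: "real \<Rightarrow> 'a::metric_space \<Rightarrow> nat \<Rightarrow> 'a set" where
  "dball \<delta> x0 n = {y. \<exists>p. dpath \<delta> x0 n p \<and> p ! n = y}"

definition dcomp :: "real \<Rightarrow> 'a::metric_space \<Rightarrow> 'a set" where
  "dcomp \<delta> x = {y. \<exists>n. y \<in> dball \<delta> x n}"

definition outer_mu :: "'a measure \<Rightarrow> 'a set \<Rightarrow> ennreal" where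
  "outer_mu \<mu> B = (INF A \<in> {A \<in> sets \<mu>. B \<subseteq> A}. emeasure \<mu> A)"

definition vol :: "'a::metric_space measure \<Rightarrow> real \<Rightarrow> 'a \<Rightarrow> nat \<Rightarrow> ennreal" where
  "vol \<mu> \<delta> x l = (SUP x0 \<in> dcomp \<delta> x. outer_mu \<mu> (dball \<delta> x0 l))"

definition eln :: "ereal \<Rightarrow> ereal" where
  "eln y = (if y = \<infinity> then \<infinity> else if y \<le> 0 then -\<infinity> else ereal (ln (real_of_ereal y)))"

definition pathdist :: "nat \<Rightarrow> 'a::metric_space list \<Rightarrow> 'a list \<Rightarrow> real" where
  "pathdist n p q = Max ((\<lambda>i. dist (p ! i) (q ! i)) ` {..n})"

definition separated_paths :: "real \<Rightarrow> real \<Rightarrow> 'a::metric_space \<Rightarrow> nat \<Rightarrow> 'a list set \<Rightarrow> bool" where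
  "separated_paths R \<delta> x0 n P \<longleftrightarrow> (\<forall>p\<in>P. dpath \<delta> x0 n p) \<and>
     (\<forall>p\<in>P. \<forall>q\<in>P. p \<noteq> q \<longrightarrow> pathdist n p q > R)"

definition sep_count :: "nat \<Rightarrow> real \<Rightarrow> real \<Rightarrow> 'a::metric_space \<Rightarrow> enat" where
  "sep_count n R \<delta> x0 = (SUP P \<in> {P. finite P \<and> separated_paths R \<delta> x0 n P}. enat (card P))"

definition enat_ln :: "enat \<Rightarrow> ereal" where
  "enat_ln k = eln (ereal_of_enat k)"

definition coarse_entropy :: "'a::metric_space \<Rightarrow> ereal" where
  "coarse_entropy x0 = Lim at_top (\<lambda>\<delta>::real. Lim at_top (\<lambda>R::real.
      limsup (\<lambda>n. ereal (1 / real n) * enat_ln (sep_count n R \<delta> x0))))"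

end

theory Submission
  imports Defs
begin

text \<open>Fix c > 0 below the growth rate of vol delta0, and k. For large l, some delta0-ball
  B(y, l) of the component of x has measure above exp (c l), while every R-ball around a point of
  the R-component of x has measure at most vol R x 1 (finite); hence B(y, l) contains about
  exp (c l / 2) points that are R-separated. Subsampling every k-th step turns delta0-paths of
  length l into delta-paths of length about l / k once delta is at least k delta0. Concatenating
  out-and-back excursions from y to these points yields exponentially many R-separated delta-paths
  from x0, with growth rate at least c k / 16, for every R. Letting k grow gives infinite
  coarse entropy.\<close>

lemma dpath_mono: "dpath d x n p \<Longrightarrow> d \<le> d' \<Longrightarrow> dpath d' x n p"
  unfolding dpath_def by force

lemma dpath_replicate: "0 \<le> d \<Longrightarrow> dpath d y r (replicate (Suc r) y)"
  unfolding dpath_def by (simp add: nth_Cons')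

lemma dpath_dist_le:
  assumes "dpath d y l p" "a \<le> b" "b \<le> l"
  shows "dist (p ! a) (p ! b) \<le> real (b - a) * d"
  using assms(2,3)
proof (induction b)
  case (Suc b)
  show ?case
  proof (cases "a = Suc b")
    case False
    then have ab: "a \<le> b" using Suc by simp
    have "dist (p ! a) (p ! Suc b) \<le> dist (p ! a) (p ! b) + dist (p ! b) (p ! Suc b)"
      by (rule dist_triangle)
    also have "\<dots> \<le> real (b - a) * d + d"
      using Suc ab assms(1) unfolding dpath_def by (intro add_mono) auto
    also have "\<dots> = real (Suc b - a) * d" using ab by (simp add: Suc_diff_le algebra_simps)
    finally show ?thesis .
  qed simp
qed simp

lemma nth_append_tl:
  assumes "length p = Suc a" "q ! 0 = p ! a" "a \<le> i" "i < a + length q"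
  shows "(p @ tl q) ! i = q ! (i - a)"
proof (cases "i = a")
  case False
  then have "i - Suc a < length (tl q)" "Suc (i - Suc a) = i - a" using assms(3,4) by auto
  then show ?thesis using assms(1,3) False by (simp add: nth_append nth_tl)
qed (use assms in \<open>simp add: nth_append\<close>)

lemma dpath_append:
  assumes "dpath d x a p" "p ! a = y" "dpath d y b q"
  shows "dpath d x (a + b) (p @ tl q)" and "(p @ tl q) ! (a + b) = q ! b"
proof -
  have lp: "length p = Suc a" and lq: "length q = Suc b" and q0: "q ! 0 = p ! a"
    using assms unfolding dpath_def by auto
  have nth: "(p @ tl q) ! i = (if i \<le> a then p ! i else q ! (i - a))" if "i \<le> a + b" for i
    using that lp lq q0 nth_append_tl[OF lp q0, of i] by (auto simp: nth_append)
  have "dist ((p @ tl q) ! i) ((p @ tl q) ! Suc i) \<le> d" if i: "i < a + b" for i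
  proof (cases "i < a")
    case True then show ?thesis using nth i assms(1) unfolding dpath_def by auto
  next
    case False
    then have "i - a < b" "Suc i - a = Suc (i - a)" using i by auto
    then show ?thesis using nth[of i] nth[of "Suc i"] i False assms(3) q0 assms(2)
      unfolding dpath_def by (cases "i = a") auto
  qed
  moreover have "(p @ tl q) ! 0 = x" using nth[of 0] assms(1) unfolding dpath_def by auto
  moreover have "length (p @ tl q) = Suc (a + b)" using lp lq by simp
  ultimately show "dpath d x (a + b) (p @ tl q)" unfolding dpath_def by auto
  show "(p @ tl q) ! (a + b) = q ! b" using nth[of "a + b"] assms(2) q0 by (cases b) auto
qed

lemma dpath_rev:
  assumes "dpath d y l p" "p ! l = z"
  shows "dpath d z l (rev p)" and "rev p ! l = y"
proof -
  have len: "length p = Suc l" using assms(1) unfolding dpath_def by simp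
  have rev_nth': "rev p ! i = p ! (l - i)" if "i \<le> l" for i
    using that len by (simp add: rev_nth)
  have "dist (rev p ! i) (rev p ! Suc i) \<le> d" if "i < l" for i
  proof -
    have "l - i = Suc (l - Suc i)" "l - Suc i < l" using that by auto
    then show ?thesis using that assms(1) rev_nth'[of i] rev_nth'[of "Suc i"]
      unfolding dpath_def by (simp add: dist_commute)
  qed
  then show "dpath d z l (rev p)" using len assms(2) rev_nth'[of 0] unfolding dpath_def by simp
  show "rev p ! l = y" using rev_nth'[of l] assms(1) unfolding dpath_def by simp
qed

lemma dpath_out_and_back:
  assumes "dpath d y l p" "p ! l = z"
  shows "dpath d y (2 * l) (p @ tl (rev p))" and "(p @ tl (rev p)) ! (2 * l) = y"
    and "(p @ tl (rev p)) ! l = z"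
proof -
  note return = dpath_rev[OF assms]
  show "dpath d y (2 * l) (p @ tl (rev p))" "(p @ tl (rev p)) ! (2 * l) = y"
    using dpath_append[OF assms return(1)] return(2) by (simp_all add: mult_2)
  show "(p @ tl (rev p)) ! l = z"
    using assms unfolding dpath_def by (simp add: nth_append)
qed

lemma dpath_append_loops:
  assumes "dpath d x m p" "p ! m = y" "\<forall>w\<in>set ws. dpath d y K w \<and> w ! K = y"
  shows "dpath d x (m + K * length ws) (p @ concat (map tl ws)) \<and>
    (p @ concat (map tl ws)) ! (m + K * length ws) = y \<and>
    (\<forall>b<length ws. \<forall>i\<le>K. (p @ concat (map tl ws)) ! (m + K * b + i) = ws ! b ! i)"
  using assms
proof (induction ws arbitrary: p m)
  case (Cons w ws)
  have w: "dpath d y K w" "w ! K = y" using Cons.prems(3) by auto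
  note pw = dpath_append[OF Cons.prems(1,2) w(1)]
  have IH: "dpath d x (m + K + K * length ws) (p @ tl w @ concat (map tl ws)) \<and>
    (p @ tl w @ concat (map tl ws)) ! (m + K + K * length ws) = y \<and>
    (\<forall>b<length ws. \<forall>i\<le>K. (p @ tl w @ concat (map tl ws)) ! (m + K + K * b + i) = ws ! b ! i)"
    using Cons.IH[OF pw(1)] pw(2) w(2) Cons.prems(3) by simp
  have lp: "length p = Suc m" and lw: "length w = Suc K" and w0: "w ! 0 = p ! m"
    using Cons.prems(1,2) w(1) unfolding dpath_def by auto
  have first: "(p @ tl w @ concat (map tl ws)) ! (m + i) = w ! i" if "i \<le> K" for i
  proof -
    have "m + i < length (p @ tl w)" using that lp lw by simp
    then have "(p @ tl w @ rest) ! (m + i) = (p @ tl w) ! (m + i)" for rest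
      by (metis append_assoc nth_append_left)
    then show ?thesis using nth_append_tl[OF lp w0, of "m + i"] that lw by simp
  qed
  have "\<forall>b<length (w # ws). \<forall>i\<le>K. (p @ tl w @ concat (map tl ws)) ! (m + K * b + i) = (w # ws) ! b ! i"
  proof (intro allI impI)
    fix b i assume "b < length (w # ws)" "i \<le> K"
    then show "(p @ tl w @ concat (map tl ws)) ! (m + K * b + i) = (w # ws) ! b ! i"
    proof (cases b)
      case (Suc b')
      have "m + K * b + i = m + K + K * b' + i" using Suc by simp
      moreover have "b' < length ws" using \<open>b < length (w # ws)\<close> Suc by simp
      ultimately show ?thesis using IH \<open>i \<le> K\<close> Suc by (metis nth_Cons_Suc)
    qed (use first \<open>i \<le> K\<close> in simp)
  qed
  then show ?case using IH by (simp add: algebra_simps)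
qed simp

lemma dball_subset_subsample:
  assumes "0 < k" "0 \<le> d0" "real k * d0 \<le> d"
  shows "dball d0 y l \<subseteq> dball d y (l div k + 1)"
proof
  fix z assume "z \<in> dball d0 y l"
  then obtain p where p: "dpath d0 y l p" "p ! l = z" unfolding dball_def by auto
  define p' where "p' = map (\<lambda>i. p ! min (k * i) l) [0..<l div k + 2]"
  have kl: "l \<le> k * (l div k + 1)"
  proof -
    have "k * (l div k + 1) = k * (l div k) + k" by simp
    then show ?thesis using mult_div_mod_eq[of k l] mod_less_divisor[OF assms(1), of l] by linarith
  qed
  have "dist (p' ! i) (p' ! Suc i) \<le> d" if "i < l div k + 1" for i
  proof -
    have "p' ! i = p ! min (k * i) l" "p' ! Suc i = p ! min (k * Suc i) l"
      using that by (simp_all add: p'_def nth_append del: upt_Suc)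
    moreover have "dist (p ! min (k * i) l) (p ! min (k * Suc i) l)
        \<le> real (min (k * Suc i) l - min (k * i) l) * d0"
      by (rule dpath_dist_le[OF p(1)]) auto
    moreover have "\<dots> \<le> real k * d0" by (intro mult_right_mono assms(2)) auto
    ultimately show ?thesis using assms(3) by simp
  qed
  moreover have "length p' = Suc (l div k + 1)" by (simp add: p'_def)
  moreover have "p' ! 0 = y" using p(1) by (simp add: p'_def dpath_def del: upt_Suc)
  moreover have "p' ! (l div k + 1) = z" using kl p(2) by (simp add: p'_def del: upt_Suc)
  ultimately show "z \<in> dball d y (l div k + 1)" unfolding dball_def dpath_def by blast
qed

lemma dball_subset_dcomp: "dball d x n \<subseteq> dcomp d x"
  unfolding dcomp_def by blast

lemma dcomp_trans:
  assumes "y \<in> dcomp d x" "z \<in> dcomp d y"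
  shows "z \<in> dcomp d x"
proof -
  obtain a p where p: "dpath d x a p" "p ! a = y" using assms(1) unfolding dcomp_def dball_def by auto
  obtain b q where q: "dpath d y b q" "q ! b = z" using assms(2) unfolding dcomp_def dball_def by auto
  have "z \<in> dball d x (a + b)"
    using dpath_append[OF p q(1)] q(2) unfolding dball_def by auto
  then show ?thesis unfolding dcomp_def by auto
qed

lemma dcomp_mono: "d \<le> d' \<Longrightarrow> dcomp d x \<subseteq> dcomp d' x"
  unfolding dcomp_def dball_def using dpath_mono by blast

lemma cball_subset_dball: "cball z d \<subseteq> dball d z 1"
proof
  fix w assume "w \<in> cball z d"
  then have "dpath d z 1 [z, w]" by (simp add: dpath_def dist_commute)
  then show "w \<in> dball d z 1" unfolding dball_def by force
qed

lemma dcomp_if_dist_le: "dist x0 x \<le> d \<Longrightarrow> x \<in> dcomp d x0"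
  using cball_subset_dball[of x0 d] dball_subset_dcomp[of d x0 1] by auto

text \<open>The path first runs from x0 to y, then makes an excursion from y to each entry q of qs and
  back, and finally rests at y; the b-th excursion visits its point at time m + 2 L b + L.\<close>

lemma dpath_excursions:
  assumes "0 \<le> d" and p0: "dpath d x0 m p0" "p0 ! m = y"
    and fw: "\<And>q. q \<in> set qs \<Longrightarrow> dpath d y L (fw q) \<and> fw q ! L = q"
    and n: "m + 2 * L * length qs \<le> n"
  defines "g \<equiv> (p0 @ concat (map (\<lambda>q. tl (fw q @ tl (rev (fw q)))) qs))
    @ replicate (n - (m + 2 * L * length qs)) y"
  shows "dpath d x0 n g" and "\<And>b. b < length qs \<Longrightarrow> g ! (m + 2 * L * b + L) = qs ! b"
proof -
  define loop where "loop q = fw q @ tl (rev (fw q))" for q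
  define r where "r = n - (m + 2 * L * length qs)"
  have g: "g = (p0 @ concat (map tl (map loop qs))) @ tl (replicate (Suc r) y)"
    unfolding g_def loop_def r_def by (simp add: comp_def)
  have loops: "dpath d y (2 * L) (loop q) \<and> loop q ! (2 * L) = y \<and> loop q ! L = q"
    if "q \<in> set qs" for q
    using dpath_out_and_back[OF fw[OF that, THEN conjunct1] fw[OF that, THEN conjunct2]]
    unfolding loop_def by simp
  then have "\<forall>w\<in>set (map loop qs). dpath d y (2 * L) w \<and> w ! (2 * L) = y" by simp
  note excursions = dpath_append_loops[OF p0 this, simplified length_map]
  show "dpath d x0 n g"
    using dpath_append(1)[OF excursions[THEN conjunct1] excursions[THEN conjunct2, THEN conjunct1]
        dpath_replicate[OF assms(1), of y r]] n
    unfolding g r_def by simp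
  fix b assume b: "b < length qs"
  have "m + 2 * L * b + L < length (p0 @ concat (map tl (map loop qs)))"
  proof -
    have "2 * L * b + L < 2 * L * length qs + 1"
      using b mult_le_mono2[of "Suc b" "length qs" "2 * L"] by simp
    then show ?thesis using excursions unfolding dpath_def by simp
  qed
  then have "g ! (m + 2 * L * b + L) = (p0 @ concat (map tl (map loop qs))) ! (m + 2 * L * b + L)"
    unfolding g by (rule nth_append_left)
  also have "\<dots> = map loop qs ! b ! L"
    using excursions[THEN conjunct2, THEN conjunct2, rule_format, of b L] b by simp
  also have "\<dots> = qs ! b" using loops[of "qs ! b"] b by simp
  finally show "g ! (m + 2 * L * b + L) = qs ! b" .
qed

lemma card_pow_le_sep_count:
  fixes x0 y :: "'a::metric_space"
  assumes "0 \<le> d" "y \<in> dball d x0 m"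
    and Q: "finite Q" "Q \<subseteq> dball d y L"
    and sep: "\<forall>q\<in>Q. \<forall>q'\<in>Q. q \<noteq> q' \<longrightarrow> R < dist q q'"
    and n: "m + 2 * L * j \<le> n"
  shows "enat (card Q ^ j) \<le> sep_count n R d x0"
proof -
  obtain p0 where p0: "dpath d x0 m p0" "p0 ! m = y" using assms(2) unfolding dball_def by auto
  have "\<forall>q\<in>Q. \<exists>p. dpath d y L p \<and> p ! L = q" using Q(2) unfolding dball_def by blast
  from bchoice[OF this] obtain fw where fw: "\<forall>q\<in>Q. dpath d y L (fw q) \<and> fw q ! L = q" by blast
  define S where "S = {qs. set qs \<subseteq> Q \<and> length qs = j}"
  define g where "g qs = (p0 @ concat (map (\<lambda>q. tl (fw q @ tl (rev (fw q)))) qs))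
    @ replicate (n - (m + 2 * L * length qs)) y" for qs
  have path: "dpath d x0 n (g qs)" and sample: "\<And>b. b < j \<Longrightarrow> g qs ! (m + 2 * L * b + L) = qs ! b"
    if "qs \<in> S" for qs
  proof -
    have qs: "\<And>q. q \<in> set qs \<Longrightarrow> dpath d y L (fw q) \<and> fw q ! L = q" "length qs = j"
      using that fw unfolding S_def by auto
    show "dpath d x0 n (g qs)" "\<And>b. b < j \<Longrightarrow> g qs ! (m + 2 * L * b + L) = qs ! b"
      using dpath_excursions[where qs = qs and fw = fw and L = L, OF assms(1) p0 qs(1)] n qs(2)
      unfolding g_def by simp_all
  qed
  have separated: "R < pathdist n (g qs) (g qs')" if qs: "qs \<in> S" "qs' \<in> S" "qs \<noteq> qs'" for qs qs'
  proof -
    obtain b where b: "b < j" "qs ! b \<noteq> qs' ! b"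
      using qs nth_equalityI[of qs qs'] unfolding S_def by auto
    define t where "t = m + 2 * L * b + L"
    have "t \<le> n" using n b mult_le_mono2[of "Suc b" j "2 * L"] unfolding t_def by simp
    have "qs ! b \<in> Q" "qs' ! b \<in> Q" using qs(1,2) b(1) unfolding S_def by auto
    then have "R < dist (g qs ! t) (g qs' ! t)"
      using sep b sample[OF qs(1) b(1)] sample[OF qs(2) b(1)] unfolding t_def by auto
    also have "\<dots> \<le> pathdist n (g qs) (g qs')"
      unfolding pathdist_def by (rule Max_ge) (use \<open>t \<le> n\<close> in auto)
    finally show ?thesis .
  qed
  have inj: "inj_on g S"
  proof
    fix qs qs' assume "qs \<in> S" "qs' \<in> S" "g qs = g qs'"
    then show "qs = qs'" using sample[of qs] sample[of qs'] by (intro nth_equalityI) (auto simp: S_def)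
  qed
  have "separated_paths R d x0 n (g ` S)"
    unfolding separated_paths_def using path separated by auto
  moreover have "finite (g ` S)" unfolding S_def using finite_lists_length_eq[OF Q(1)] by simp
  moreover have "card (g ` S) = card Q ^ j"
    using card_image[OF inj] card_lists_length_eq[OF Q(1)] unfolding S_def by simp
  ultimately show ?thesis unfolding sep_count_def by (intro SUP_upper2[of "g ` S"]) auto
qed

lemma outer_mu_le_emeasure: "A \<in> sets \<mu> \<Longrightarrow> B \<subseteq> A \<Longrightarrow> outer_mu \<mu> B \<le> emeasure \<mu> A"
  unfolding outer_mu_def by (rule INF_lower) auto

lemma emeasure_le_outer_mu: "A \<in> sets \<mu> \<Longrightarrow> A \<subseteq> B \<Longrightarrow> emeasure \<mu> A \<le> outer_mu \<mu> B"
  unfolding outer_mu_def by (rule INF_greatest) (auto intro: emeasure_mono)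

lemma emeasure_cball_le_vol:
  assumes "sets \<mu> = sets borel" "z \<in> dcomp R x"
  shows "emeasure \<mu> (cball z R) \<le> vol \<mu> R x 1"
proof -
  have "emeasure \<mu> (cball z R) \<le> outer_mu \<mu> (dball R z 1)"
    by (rule emeasure_le_outer_mu) (use assms(1) cball_subset_dball in auto)
  also have "\<dots> \<le> vol \<mu> R x 1" unfolding vol_def by (rule SUP_upper) (use assms(2) in auto)
  finally show ?thesis .
qed

text \<open>A maximal R-separated subset of B is an R-net of B, so if it had fewer than K points,
  B would be covered by fewer than K balls of measure at most C.\<close>

lemma exists_separated_subset:
  fixes \<mu> :: "'a::metric_space measure" and C :: ennreal
  assumes "sets \<mu> = sets borel" "0 \<le> R"
    and C: "\<And>z. z \<in> B \<Longrightarrow> emeasure \<mu> (cball z R) \<le> C"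
    and K: "of_nat K * C < outer_mu \<mu> B"
  shows "\<exists>Q\<subseteq>B. finite Q \<and> K \<le> card Q \<and> (\<forall>q\<in>Q. \<forall>q'\<in>Q. q \<noteq> q' \<longrightarrow> R < dist q q')"
proof (rule ccontr)
  assume neg: "\<not> ?thesis"
  define F where "F = {Q. Q \<subseteq> B \<and> finite Q \<and> card Q \<le> K \<and> (\<forall>q\<in>Q. \<forall>q'\<in>Q. q \<noteq> q' \<longrightarrow> R < dist q q')}"
  have "{} \<in> F" unfolding F_def by auto
  have fin: "finite (card ` F)" by (rule finite_subset[of _ "{..K}"]) (auto simp: F_def)
  have "Max (card ` F) \<in> card ` F" using Max_in[OF fin] \<open>{} \<in> F\<close> by blast
  then obtain Q where Q: "card Q = Max (card ` F)" "Q \<in> F" by (auto elim!: imageE)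
  have maxQ: "card Q' \<le> card Q" if "Q' \<in> F" for Q' using Q(1) fin that by simp
  have QB: "Q \<subseteq> B" "finite Q" and Qsep: "\<forall>q\<in>Q. \<forall>q'\<in>Q. q \<noteq> q' \<longrightarrow> R < dist q q'"
    using Q(2) unfolding F_def by auto
  have "\<not> K \<le> card Q" using neg QB Qsep by blast
  then have lt: "card Q < K" by simp
  have cover: "B \<subseteq> (\<Union>q\<in>Q. cball q R)"
  proof
    fix b assume b: "b \<in> B"
    show "b \<in> (\<Union>q\<in>Q. cball q R)"
    proof (rule ccontr)
      assume "b \<notin> (\<Union>q\<in>Q. cball q R)"
      then have far: "\<forall>q\<in>Q. R < dist q b" "\<forall>q\<in>Q. R < dist b q"
        by (simp_all add: not_le dist_commute)
      have "b \<notin> Q"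
      proof
        assume "b \<in> Q"
        with far(1) have "R < dist b b" by blast
        with assms(2) show False by simp
      qed
      have "\<forall>q\<in>insert b Q. \<forall>q'\<in>insert b Q. q \<noteq> q' \<longrightarrow> R < dist q q'"
        using Qsep far by blast
      moreover have "card (insert b Q) \<le> K" using lt QB(2) \<open>b \<notin> Q\<close> by simp
      ultimately have "insert b Q \<in> F" unfolding F_def using QB b by simp
      then have "card (insert b Q) \<le> card Q" by (rule maxQ)
      then show False using \<open>b \<notin> Q\<close> QB(2) by simp
    qed
  qed
  have balls: "cball q R \<in> sets \<mu>" for q using assms(1) by simp
  have "outer_mu \<mu> B \<le> emeasure \<mu> (\<Union>q\<in>Q. cball q R)"
    by (rule outer_mu_le_emeasure[OF _ cover]) (use balls QB(2) in auto)
  also have "\<dots> \<le> (\<Sum>q\<in>Q. emeasure \<mu> (cball q R))"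
    by (rule emeasure_subadditive_finite) (use balls QB(2) in auto)
  also have "\<dots> \<le> (\<Sum>q\<in>Q. C)" by (rule sum_mono) (use C QB(1) in auto)
  also have "\<dots> = of_nat (card Q) * C" by simp
  also have "\<dots> \<le> of_nat K * C" using lt by (intro mult_right_mono) auto
  finally show False using K by simp
qed

lemma exists_large_separated_subset:
  fixes \<mu> :: "'a::metric_space measure"
  assumes "sets \<mu> = sets borel" "0 \<le> R" "B \<subseteq> dcomp R x"
    and vol: "vol \<mu> R x 1 = ennreal C" "0 \<le> C" and E: "1 \<le> E" "2 * C < E"
    and big: "ennreal (E * E) < outer_mu \<mu> B"
  shows "\<exists>Q\<subseteq>B. finite Q \<and> E \<le> real (card Q) \<and> (\<forall>q\<in>Q. \<forall>q'\<in>Q. q \<noteq> q' \<longrightarrow> R < dist q q')"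
proof -
  define K where "K = nat \<lceil>E\<rceil>"
  have K: "E \<le> real K" "real K < E + 1" unfolding K_def using E(1) by linarith+
  have "real K * C \<le> (E + 1) * C" using K vol(2) by (intro mult_right_mono) auto
  also have "\<dots> \<le> (2 * E) * C" using E(1) vol(2) by (intro mult_right_mono) auto
  also have "\<dots> = E * (2 * C)" by simp
  also have "\<dots> < E * E" using E by simp
  finally have "ennreal (real K * C) < ennreal (E * E)" using E(1) by (intro ennreal_lessI) auto
  then have KC: "of_nat K * ennreal C < outer_mu \<mu> B"
    using big vol(2) by (simp add: ennreal_mult ennreal_of_nat_eq_real_of_nat)
  have "emeasure \<mu> (cball z R) \<le> ennreal C" if "z \<in> B" for z
  proof -
    have "z \<in> dcomp R x" using assms(3) that by blast
    from emeasure_cball_le_vol[OF assms(1) this] show ?thesis unfolding vol(1) .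
  qed
  from exists_separated_subset[OF assms(1,2) this KC] obtain Q where "Q \<subseteq> B" "finite Q" "K \<le> card Q"
      "\<forall>q\<in>Q. \<forall>q'\<in>Q. q \<noteq> q' \<longrightarrow> R < dist q q'"
    by blast
  moreover have "E \<le> real (card Q)" using K(1) \<open>K \<le> card Q\<close> by linarith
  ultimately show ?thesis by blast
qed

lemma eln_mono: "a \<le> b \<Longrightarrow> eln a \<le> eln b"
  unfolding eln_def by (cases a; cases b) auto

lemma enat_ln_mono: "a \<le> b \<Longrightarrow> enat_ln a \<le> enat_ln b"
  unfolding enat_ln_def by (intro eln_mono) simp

lemma enat_ln_power: "1 \<le> N \<Longrightarrow> enat_ln (enat (N ^ j)) = ereal (real j * ln (real N))"
  unfolding enat_ln_def eln_def by (simp add: ln_realpow not_le)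

lemma limsup_growth_ge_of_power_le:
  fixes s :: "nat \<Rightarrow> enat"
  assumes L: "0 < L" and N: "1 \<le> N"
    and s: "\<And>n j. m + 2 * L * j \<le> n \<Longrightarrow> enat (N ^ j) \<le> s n"
  shows "ereal (ln (real N) / (4 * real L)) \<le> limsup (\<lambda>n. ereal (1 / real n) * enat_ln (s n))"
proof (rule le_Limsup)
  show "\<forall>\<^sub>F n in sequentially. ereal (ln (real N) / (4 * real L)) \<le> ereal (1 / real n) * enat_ln (s n)"
    unfolding eventually_sequentially
  proof (intro exI allI impI)
    fix n assume n: "2 * m + 4 * L + 1 \<le> n"
    define j where "j = (n - m) div (2 * L)"
    have j: "2 * L * j + (n - m) mod (2 * L) = n - m" "(n - m) mod (2 * L) < 2 * L"
      using L unfolding j_def by simp_all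
    then have "m + 2 * L * j \<le> n" "n \<le> 4 * L * j" using n by linarith+
    have lnN: "0 \<le> ln (real N)" using N by simp
    have "real n * ln (real N) \<le> real (4 * L * j) * ln (real N)"
      using of_nat_mono[OF \<open>n \<le> 4 * L * j\<close>] lnN by (rule mult_right_mono)
    then have "ln (real N) / (4 * real L) \<le> real j * ln (real N) / real n"
      using n L by (simp add: field_simps)
    then have "ereal (ln (real N) / (4 * real L)) \<le> ereal (1 / real n) * enat_ln (enat (N ^ j))"
      by (simp add: enat_ln_power[OF N])
    also have "\<dots> \<le> ereal (1 / real n) * enat_ln (s n)"
      by (intro ereal_mult_left_mono enat_ln_mono s \<open>m + 2 * L * j \<le> n\<close>) simp
    finally show "ereal (ln (real N) / (4 * real L)) \<le> ereal (1 / real n) * enat_ln (s n)" .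
  qed
qed simp

lemma frequently_exp_less:
  fixes v :: "nat \<Rightarrow> ennreal"
  assumes fin: "\<And>l. v l < \<infinity>" and c: "0 < c"
    and growth: "ereal c < limsup (\<lambda>l. ereal (1 / real l) * eln (enn2ereal (v l)))"
  shows "\<exists>l\<ge>N. ennreal (exp (c * real l)) < v l"
proof -
  define u where "u l = ereal (1 / real l) * eln (enn2ereal (v l))" for l
  obtain l where l: "N \<le> l" "ereal c < u l"
  proof (rule ccontr)
    assume "\<not> thesis"
    then have "\<forall>\<^sub>F l in sequentially. u l \<le> ereal c"
      using that unfolding eventually_sequentially by (meson not_le)
    then have "limsup u \<le> ereal c" by (rule Limsup_bounded)
    then show False using growth unfolding u_def by simp
  qed
  \<comment> \<open>u 0 = 0 because 1 / 0 = 0, so c > 0 rules out l = 0\<close>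
  have lpos: "0 < l" using l c by (cases "l = 0") (auto simp: u_def zero_ereal_def[symmetric])
  obtain r where r: "v l = ennreal r" "0 \<le> r" using fin[of l] by (cases "v l") auto
  have "0 < r"
  proof (rule ccontr)
    assume "\<not> 0 < r"
    then have "eln (ereal r) = -\<infinity>" unfolding eln_def by auto
    then show False using l(2) lpos r unfolding u_def by simp
  qed
  then have "c < ln r / real l" using l(2) r unfolding u_def eln_def by simp
  then have "c * real l < ln r" using lpos by (simp add: field_simps)
  then have "exp (c * real l) < r" using \<open>0 < r\<close> by (metis exp_less_mono exp_ln)
  then have "ennreal (exp (c * real l)) < v l" using r by (simp add: ennreal_less_iff)
  then show ?thesis using l(1) by blast
qed

definition sep_entropy :: "real \<Rightarrow> real \<Rightarrow> 'a::metric_space \<Rightarrow> ereal" where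
  "sep_entropy R \<delta> x0 = limsup (\<lambda>n. ereal (1 / real n) * enat_ln (sep_count n R \<delta> x0))"

lemma coarse_entropy_eq: "coarse_entropy x0 = Lim at_top (\<lambda>\<delta>. Lim at_top (\<lambda>R. sep_entropy R \<delta> x0))"
  unfolding coarse_entropy_def sep_entropy_def ..

lemma sep_count_antimono: "R \<le> R' \<Longrightarrow> sep_count n R' d x0 \<le> sep_count n R d x0"
  unfolding sep_count_def separated_paths_def by (rule SUP_subset_mono) force+

lemma sep_entropy_antimono: "R \<le> R' \<Longrightarrow> sep_entropy R' \<delta> x0 \<le> sep_entropy R \<delta> x0"
  unfolding sep_entropy_def
  by (intro Limsup_mono always_eventually allI ereal_mult_left_mono enat_ln_mono sep_count_antimono) simp_all

lemma Lim_at_top_antimono: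
  fixes h :: "real \<Rightarrow> ereal"
  assumes "\<And>a b. a \<le> b \<Longrightarrow> h b \<le> h a"
  shows "Lim at_top h = (INF R. h R)"
proof (rule tendsto_Lim)
  show "(h \<longlongrightarrow> (INF R. h R)) at_top"
  proof (rule order_tendstoI)
    fix a assume "a < (INF R. h R)"
    then show "\<forall>\<^sub>F R in at_top. a < h R"
      by (intro always_eventually allI) (meson INF_lower UNIV_I order_less_le_trans)
  next
    fix a assume "(INF R. h R) < a"
    then obtain R0 where "h R0 < a" by (auto simp: INF_less_iff)
    then show "\<forall>\<^sub>F R in at_top. h R < a"
      unfolding eventually_at_top_linorder using assms by (meson order_le_less_trans)
  qed
qed simp

lemma exists_separated_in_dball:
  fixes \<mu> :: "'a::metric_space measure"
  assumes borel: "sets \<mu> = sets borel" and vol_R: "vol \<mu> R x 1 < \<infinity>"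
    and c: "0 < c" and \<delta>0: "0 < \<delta>0" "\<delta>0 \<le> R"
    and freq: "\<And>N. \<exists>l\<ge>N. ennreal (exp (c * real l)) < vol \<mu> \<delta>0 x l"
  shows "\<exists>l\<ge>N. \<exists>y. \<exists>Q\<subseteq>dball \<delta>0 y l. y \<in> dcomp \<delta>0 x \<and> finite Q \<and>
    exp (c * real l / 2) \<le> real (card Q) \<and> (\<forall>q\<in>Q. \<forall>q'\<in>Q. q \<noteq> q' \<longrightarrow> R < dist q q')"
proof -
  define C where "C = enn2real (vol \<mu> R x 1)"
  have vol_C: "vol \<mu> R x 1 = ennreal C" "0 \<le> C"
    using vol_R unfolding C_def by (simp_all add: ennreal_enn2real_if less_top)
  obtain l where l: "N + nat \<lceil>2 * ln (2 * C + 1) / c\<rceil> \<le> l"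
    and vol_l: "ennreal (exp (c * real l)) < vol \<mu> \<delta>0 x l"
    using freq by blast
  define E where "E = exp (c * real l / 2)"
  have E: "1 \<le> E" "E * E = exp (c * real l)" unfolding E_def using c by (simp_all flip: exp_add)
  have "2 * C < E"
  proof -
    have "2 * ln (2 * C + 1) / c \<le> real l" using l by linarith
    then have "ln (2 * C + 1) \<le> c * real l / 2" using c by (simp add: field_simps)
    then have "exp (ln (2 * C + 1)) \<le> E" unfolding E_def by simp
    then show ?thesis using vol_C(2) by simp
  qed
  obtain y where y: "y \<in> dcomp \<delta>0 x" and y_big: "ennreal (E * E) < outer_mu \<mu> (dball \<delta>0 y l)"
    using vol_l unfolding vol_def less_SUP_iff E(2) by blast
  have ball_comp: "dball \<delta>0 y l \<subseteq> dcomp R x"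
  proof
    fix z assume "z \<in> dball \<delta>0 y l"
    then have "z \<in> dcomp \<delta>0 x" using dcomp_trans[OF y] dball_subset_dcomp by blast
    then show "z \<in> dcomp R x" using dcomp_mono[OF \<delta>0(2)] by blast
  qed
  have "0 \<le> R" using \<delta>0 by simp
  from exists_large_separated_subset[OF borel this ball_comp vol_C E(1) \<open>2 * C < E\<close> y_big]
  obtain Q where "Q \<subseteq> dball \<delta>0 y l" "finite Q" "E \<le> real (card Q)"
    "\<forall>q\<in>Q. \<forall>q'\<in>Q. q \<noteq> q' \<longrightarrow> R < dist q q'"
    by blast
  moreover have "N \<le> l" using l by linarith
  ultimately show ?thesis using y unfolding E_def
    by (intro exI[of _ l] exI[of _ y] exI[of _ Q] conjI) auto
qed

lemma sep_entropy_ge_of_volume_growth: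
  fixes \<mu> :: "'a::metric_space measure" and x x0 :: 'a
  assumes borel: "sets \<mu> = sets borel"
    and finite_vol: "\<And>r. 0 < r \<Longrightarrow> vol \<mu> r x 1 < \<infinity>"
    and c: "0 < c" and \<delta>0: "0 < \<delta>0"
    and freq: "\<And>N. \<exists>l\<ge>N. ennreal (exp (c * real l)) < vol \<mu> \<delta>0 x l"
    and k: "0 < k" and \<delta>: "real k * \<delta>0 + \<delta>0 + dist x0 x \<le> \<delta>"
    and R: "\<delta>0 \<le> R"
  shows "ereal (c * real k / 16) \<le> sep_entropy R \<delta> x0"
proof -
  have "0 \<le> real k * \<delta>0" using \<delta>0 by simp
  then have \<delta>_ge: "real k * \<delta>0 \<le> \<delta>" "\<delta>0 \<le> \<delta>" "dist x0 x \<le> \<delta>"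
    using \<delta> \<delta>0 zero_le_dist[of x0 x] by linarith+
  have "vol \<mu> R x 1 < \<infinity>" using finite_vol R \<delta>0 by simp
  from exists_separated_in_dball[OF borel this c \<delta>0 R freq, of k]
  obtain l y Q where l: "k \<le> l" and y: "y \<in> dcomp \<delta>0 x"
    and Q: "Q \<subseteq> dball \<delta>0 y l" "finite Q" "exp (c * real l / 2) \<le> real (card Q)"
    and Q_sep: "\<forall>q\<in>Q. \<forall>q'\<in>Q. q \<noteq> q' \<longrightarrow> R < dist q q'"
    by blast
  define L where "L = l div k + 1"
  have Q_L: "Q \<subseteq> dball \<delta> y L"
    using Q(1) dball_subset_subsample[OF k _ \<delta>_ge(1)] \<delta>0 unfolding L_def by auto
  have "y \<in> dcomp \<delta> x" using dcomp_mono[OF \<delta>_ge(2)] y by blast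
  with dcomp_if_dist_le[OF \<delta>_ge(3)] have "y \<in> dcomp \<delta> x0" by (rule dcomp_trans)
  then obtain m where m: "y \<in> dball \<delta> x0 m" unfolding dcomp_def by blast
  have "1 \<le> exp (c * real l / 2)" using c by simp
  then have N: "1 \<le> card Q" using Q(3) by linarith
  have growth: "ereal (ln (real (card Q)) / (4 * real L)) \<le> sep_entropy R \<delta> x0"
    unfolding sep_entropy_def
    by (rule limsup_growth_ge_of_power_le[OF _ N card_pow_le_sep_count[OF _ m Q(2) Q_L Q_sep]])
      (use \<delta>_ge \<delta>0 in \<open>simp_all add: L_def\<close>)
  have "c * real k / 16 \<le> ln (real (card Q)) / (4 * real L)"
  proof -
    have lnQ: "c * real l / 2 \<le> ln (real (card Q))"
      using ln_le_cancel_iff[of "exp (c * real l / 2)" "real (card Q)"] Q(3) N by simp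
    have "L * k = l div k * k + k" unfolding L_def by simp
    then have "L * k \<le> 2 * l" using l div_times_less_eq_dividend[of l k] by linarith
    then have "real L * real k \<le> 2 * real l" by (simp flip: of_nat_mult)
    then have "c * real k * real L \<le> c * real l * 2" using c by (simp add: algebra_simps)
    then have "c * real k / 16 \<le> (c * real l / 2) / (4 * real L)" by (simp add: L_def field_simps)
    also have "\<dots> \<le> ln (real (card Q)) / (4 * real L)" by (rule divide_right_mono[OF lnQ]) simp
    finally show ?thesis .
  qed
  then have "ereal (c * real k / 16) \<le> ereal (ln (real (card Q)) / (4 * real L))" by simp
  also note growth
  finally show ?thesis .
qed

lemma INF_sep_entropy_ge_of_volume_growth:
  fixes \<mu> :: "'a::metric_space measure" and x x0 :: 'a
  assumes "sets \<mu> = sets borel"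
    and "\<And>r. 0 < r \<Longrightarrow> vol \<mu> r x 1 < \<infinity>"
    and "0 < c" "0 < \<delta>0"
    and "\<And>N. \<exists>l\<ge>N. ennreal (exp (c * real l)) < vol \<mu> \<delta>0 x l"
    and "0 < k" "real k * \<delta>0 + \<delta>0 + dist x0 x \<le> \<delta>"
  shows "ereal (c * real k / 16) \<le> (INF R. sep_entropy R \<delta> x0)"
proof (rule INF_greatest)
  fix R
  note bound = sep_entropy_ge_of_volume_growth[OF assms]
  show "ereal (c * real k / 16) \<le> sep_entropy R \<delta> x0"
  proof (cases "\<delta>0 \<le> R")
    case False
    then have "sep_entropy \<delta>0 \<delta> x0 \<le> sep_entropy R \<delta> x0" by (intro sep_entropy_antimono) simp
    with bound[of \<delta>0] show ?thesis by simp
  qed (rule bound)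
qed

theorem mainTheorem13:
  fixes \<mu> :: "'a::metric_space measure" and x x0 :: 'a
  assumes borel: "sets \<mu> = sets borel"
    and finite_vol: "\<And>\<delta> l. \<delta> > 0 \<Longrightarrow> vol \<mu> \<delta> x l < \<infinity>"
    and growth: "\<exists>\<delta>0>0. limsup (\<lambda>l. ereal (1 / real l) * eln (enn2ereal (vol \<mu> \<delta>0 x l))) > 0"
  shows "coarse_entropy x0 = \<infinity>"
proof -
  obtain \<delta>0 where \<delta>0: "0 < \<delta>0"
    and "0 < limsup (\<lambda>l. ereal (1 / real l) * eln (enn2ereal (vol \<mu> \<delta>0 x l)))"
    using growth by blast
  from ereal_dense2[OF this(2)] obtain c where "0 < ereal c"
    and rate: "ereal c < limsup (\<lambda>l. ereal (1 / real l) * eln (enn2ereal (vol \<mu> \<delta>0 x l)))"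
    by blast
  then have c: "0 < c" by simp
  note freq = frequently_exp_less[OF finite_vol[OF \<delta>0] c rate]
  have Lim_eq_INF: "Lim at_top (\<lambda>R. sep_entropy R \<delta> x0) = (INF R. sep_entropy R \<delta> x0)" for \<delta>
    by (rule Lim_at_top_antimono) (rule sep_entropy_antimono)
  have "((\<lambda>\<delta>. INF R. sep_entropy R \<delta> x0) \<longlongrightarrow> \<infinity>) at_top"
    unfolding tendsto_PInfty
  proof
    fix M :: real
    obtain k :: nat where "16 * M / c < real k" using reals_Archimedean2 by blast
    then have M: "ereal M < ereal (c * real (Suc k) / 16)" using c by (simp add: field_simps)
    have "\<forall>\<^sub>F \<delta> in at_top. real (Suc k) * \<delta>0 + \<delta>0 + dist x0 x \<le> \<delta>" by (rule eventually_ge_at_top)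
    then show "\<forall>\<^sub>F \<delta> in at_top. ereal M < (INF R. sep_entropy R \<delta> x0)"
    proof eventually_elim
      case (elim \<delta>)
      show ?case
        using M INF_sep_entropy_ge_of_volume_growth[OF borel finite_vol c \<delta>0 freq zero_less_Suc elim]
        by (rule less_le_trans)
    qed
  qed
  then show ?thesis unfolding coarse_entropy_eq Lim_eq_INF by (rule tendsto_Lim[rotated]) simp
qed

end
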